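(* Let $G$ be a torsion-free group and let $A$ be its FC-centre. Then $A$ is a normal abelian subgroup of $G$ and $\mathcal{Z}(\mathrm{C}^*_{\mathrm{red}}(G)) \subset \mathrm{C}^*(A)$. In particular, $\mathcal{Z}(\mathrm{C}^*_{\mathrm{red}}(G)) = \mathrm{C}^*(A)^G$.
   Context: The FC-centre of $G$ is $\{g \in G \mid g \text{ has a finite conjugacy class in } G\}$. $\mathrm{C}^*_{\mathrm{red}}(G)$ is the reduced group $\mathrm{C}^*$-algebra, generated by unitaries $u_g$, $g\in G$; $\mathrm{C}^*(A)$ is identified with the $\mathrm{C}^*$-subalgebra of $\mathrm{C}^*_{\mathrm{red}}(G)$ generated by $u_a$, $a \in A$. $G$ acts on $\mathrm{C}^*(A)$ by conjugation $x \mapsto u_g x u_g^*$, and $\mathrm{C}^*(A)^G$ denotes the fixed point algebra. *)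

theory Defs
  imports "HOL-Analysis.Analysis" "HOL-Algebra.Algebra"
begin

definition torsion_free :: "('a, 'b) monoid_scheme \<Rightarrow> bool" where
  "torsion_free G \<longleftrightarrow>
     (\<forall>g\<in>carrier G. g \<noteq> \<one>\<^bsub>G\<^esub> \<longrightarrow> (\<forall>n::nat. n > 0 \<longrightarrow> g [^]\<^bsub>G\<^esub> n \<noteq> \<one>\<^bsub>G\<^esub>))"

definition FC_centre :: "('a, 'b) monoid_scheme \<Rightarrow> 'a set" where
  "FC_centre G = {g \<in> carrier G.
      finite {h \<otimes>\<^bsub>G\<^esub> g \<otimes>\<^bsub>G\<^esub> inv\<^bsub>G\<^esub> h | h. h \<in> carrier G}}"

definition l2 :: "('a, 'b) monoid_scheme \<Rightarrow> ('a \<Rightarrow> complex) set" where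
  "l2 G = {\<xi>. (\<forall>x. x \<notin> carrier G \<longrightarrow> \<xi> x = 0) \<and>
               (\<lambda>x. (cmod (\<xi> x))\<^sup>2) summable_on carrier G}"

definition l2norm :: "('a, 'b) monoid_scheme \<Rightarrow> ('a \<Rightarrow> complex) \<Rightarrow> real" where
  "l2norm G \<xi> = sqrt (infsum (\<lambda>x. (cmod (\<xi> x))\<^sup>2) (carrier G))"

text \<open>Finitely supported functions on G (elements of the group algebra C[G]).\<close>

definition finsupp :: "('a, 'b) monoid_scheme \<Rightarrow> ('a \<Rightarrow> complex) \<Rightarrow> bool" where
  "finsupp G p \<longleftrightarrow> finite {x. p x \<noteq> 0} \<and> {x. p x \<noteq> 0} \<subseteq> carrier G"

text \<open>Left regular representation of an element p of C[G] on l2(G):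
  (lambda(p) xi)(x) = sum_y p(y) xi(y^-1 x). Operators are modelled as functions
  on 'a => complex, normalised to be 0 outside l2(G).\<close>

definition lreg :: "('a, 'b) monoid_scheme \<Rightarrow> ('a \<Rightarrow> complex) \<Rightarrow> ('a \<Rightarrow> complex) \<Rightarrow> ('a \<Rightarrow> complex)" where
  "lreg G p \<xi> =
     (if \<xi> \<in> l2 G then
        (\<lambda>x. if x \<in> carrier G
              then (\<Sum>y\<in>{y. p y \<noteq> 0}. p y * \<xi> (inv\<^bsub>G\<^esub> y \<otimes>\<^bsub>G\<^esub> x)) else 0)
      else (\<lambda>_. 0))"

definition ug :: "('a, 'b) monoid_scheme \<Rightarrow> 'a \<Rightarrow> ('a \<Rightarrow> complex) \<Rightarrow> ('a \<Rightarrow> complex)" where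
  "ug G g = lreg G (\<lambda>x. if x = g then 1 else 0)"

definition op_close :: "('a, 'b) monoid_scheme \<Rightarrow> (('a \<Rightarrow> complex) \<Rightarrow> ('a \<Rightarrow> complex))
    \<Rightarrow> (('a \<Rightarrow> complex) \<Rightarrow> ('a \<Rightarrow> complex)) \<Rightarrow> real \<Rightarrow> bool" where
  "op_close G T S \<epsilon> \<longleftrightarrow>
     (\<forall>\<xi>\<in>l2 G. l2norm G (\<lambda>x. T \<xi> x - S \<xi> x) \<le> \<epsilon> * l2norm G \<xi>)"

text \<open>Norm closure in B(l2(G)) of lambda(C[B]) for a subset B of G.
  For B = G this is the reduced group C*-algebra; for a subgroup A it is
  C*(A) viewed inside C*_red(G).\<close>

definition cstar_of :: "('a, 'b) monoid_scheme \<Rightarrow> 'a set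
    \<Rightarrow> (('a \<Rightarrow> complex) \<Rightarrow> ('a \<Rightarrow> complex)) set" where
  "cstar_of G B = {T. (\<forall>\<xi>\<in>l2 G. T \<xi> \<in> l2 G) \<and> (\<forall>\<xi>. \<xi> \<notin> l2 G \<longrightarrow> T \<xi> = (\<lambda>_. 0)) \<and>
      (\<forall>\<epsilon>>0. \<exists>p. finsupp G p \<and> {x. p x \<noteq> 0} \<subseteq> B \<and> op_close G T (lreg G p) \<epsilon>)}"

definition Cred :: "('a, 'b) monoid_scheme \<Rightarrow> (('a \<Rightarrow> complex) \<Rightarrow> ('a \<Rightarrow> complex)) set" where
  "Cred G = cstar_of G (carrier G)"

definition Cred_centre :: "('a, 'b) monoid_scheme \<Rightarrow> (('a \<Rightarrow> complex) \<Rightarrow> ('a \<Rightarrow> complex)) set" where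
  "Cred_centre G = {T \<in> Cred G. \<forall>S\<in>Cred G. (\<lambda>\<xi>. T (S \<xi>)) = (\<lambda>\<xi>. S (T \<xi>))}"

text \<open>Fixed points of the conjugation action x |-> u_g x u_g^* (u_g^* = u_{g^-1}).\<close>

definition fixed_points :: "('a, 'b) monoid_scheme \<Rightarrow> (('a \<Rightarrow> complex) \<Rightarrow> ('a \<Rightarrow> complex)) set
    \<Rightarrow> (('a \<Rightarrow> complex) \<Rightarrow> ('a \<Rightarrow> complex)) set" where
  "fixed_points G Xs = {T \<in> Xs. \<forall>g\<in>carrier G. (\<lambda>\<xi>. ug G g (T (ug G (inv\<^bsub>G\<^esub> g) \<xi>))) = T}"

end

theory Submission
  imports Defs
begin

text \<open>
  The FC-centre \<open>A\<close> is a normal subgroup, since the conjugacy classes of products, inverses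
  and conjugates of elements of \<open>A\<close> are controlled by those of the factors. For \<open>a, b \<in> A\<close>
  the common centralizer of \<open>a\<close> and \<open>b\<close> in \<open>H = \<langle>a, b\<rangle>\<close> is central in \<open>H\<close> and has finite
  index (the conjugates of \<open>a\<close> and \<open>b\<close> take only finitely many values), so Schur's transfer
  argument shows that the commutator of \<open>a\<close> and \<open>b\<close> has finite order; in a torsion-free
  group it is trivial.

  If \<open>T\<close> is central in \<open>C*_red(G)\<close>, then \<open>f = T \<delta>\<^sub>1\<close> is square-summable and constant on
  conjugacy classes, hence vanishes outside \<open>A\<close>. As \<open>T\<close> commutes with right translations,
  \<open>(T \<xi>)(x)\<close> only depends on \<open>\<xi>\<close> on the coset \<open>A x\<close>; so in an approximation of \<open>T\<close> by
  \<open>\<lambda>(p)\<close> one may restrict \<open>p\<close> to \<open>A\<close>, and \<open>T \<in> C*(A)\<close>. Conversely, an element of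
  \<open>C*(A)\<close> fixed under conjugation by all \<open>u\<^sub>g\<close> commutes with all left translations, hence with
  \<open>\<lambda>(\<complex>[G])\<close> and, by continuity, with \<open>C*_red(G)\<close>.
\<close>

section \<open>The FC-centre\<close>

context group
begin

lemma inv_mult_cancel_left: "x \<in> carrier G \<Longrightarrow> y \<in> carrier G \<Longrightarrow> inv x \<otimes> (x \<otimes> y) = y"
  by (simp add: m_assoc[symmetric])

lemma mult_inv_cancel_left: "x \<in> carrier G \<Longrightarrow> y \<in> carrier G \<Longrightarrow> x \<otimes> (inv x \<otimes> y) = y"
  by (simp add: m_assoc[symmetric])

definition conj_class :: "'a \<Rightarrow> 'a set" where
  "conj_class x = {h \<otimes> x \<otimes> inv h | h. h \<in> carrier G}"

lemma FC_centre_iff: "x \<in> FC_centre G \<longleftrightarrow> x \<in> carrier G \<and> finite (conj_class x)"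
  by (simp add: FC_centre_def conj_class_def)

lemma conj_class_memI: "h \<in> carrier G \<Longrightarrow> inv h \<otimes> x \<otimes> h \<in> conj_class x"
  unfolding conj_class_def by (rule CollectI, rule exI[of _ "inv h"]) simp

lemma conj_class_conj_subset:
  assumes "g \<in> carrier G" "x \<in> carrier G"
  shows "conj_class (g \<otimes> x \<otimes> inv g) \<subseteq> conj_class x"
proof
  fix w assume "w \<in> conj_class (g \<otimes> x \<otimes> inv g)"
  then obtain k where k: "k \<in> carrier G" "w = k \<otimes> (g \<otimes> x \<otimes> inv g) \<otimes> inv k"
    by (auto simp: conj_class_def)
  then have "w = (k \<otimes> g) \<otimes> x \<otimes> inv (k \<otimes> g)" using assms by (simp add: inv_mult_group m_assoc)
  then show "w \<in> conj_class x" using k assms by (auto simp: conj_class_def)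
qed

lemma FC_centre_subgroup: "subgroup (FC_centre G) G"
proof (rule subgroupI)
  have "conj_class \<one> = {\<one>}" by (auto simp: conj_class_def intro: exI[of _ \<one>])
  then have "\<one> \<in> FC_centre G" by (simp add: FC_centre_iff)
  then show "FC_centre G \<noteq> {}" by blast
next
  fix x assume x: "x \<in> FC_centre G"
  have "conj_class (inv x) \<subseteq> (\<lambda>w. inv w) ` conj_class x"
  proof
    fix w assume "w \<in> conj_class (inv x)"
    then obtain h where h: "h \<in> carrier G" "w = h \<otimes> inv x \<otimes> inv h" by (auto simp: conj_class_def)
    then have "w = inv (h \<otimes> x \<otimes> inv h)" using x by (simp add: FC_centre_iff inv_mult_group m_assoc)
    then show "w \<in> (\<lambda>w. inv w) ` conj_class x" using h by (auto simp: conj_class_def)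
  qed
  then show "inv x \<in> FC_centre G" using x by (auto simp: FC_centre_iff dest: finite_subset)
next
  fix x y assume x: "x \<in> FC_centre G" and y: "y \<in> FC_centre G"
  have "conj_class (x \<otimes> y) \<subseteq> (\<lambda>(u, v). u \<otimes> v) ` (conj_class x \<times> conj_class y)"
  proof
    fix w assume "w \<in> conj_class (x \<otimes> y)"
    then obtain h where h: "h \<in> carrier G" "w = h \<otimes> (x \<otimes> y) \<otimes> inv h" by (auto simp: conj_class_def)
    then have "w = (h \<otimes> x \<otimes> inv h) \<otimes> (h \<otimes> y \<otimes> inv h)"
      using x y by (simp add: FC_centre_iff m_assoc inv_mult_cancel_left)
    moreover have "(h \<otimes> x \<otimes> inv h, h \<otimes> y \<otimes> inv h) \<in> conj_class x \<times> conj_class y"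
      using h by (auto simp: conj_class_def)
    ultimately show "w \<in> (\<lambda>(u, v). u \<otimes> v) ` (conj_class x \<times> conj_class y)" by force
  qed
  then show "x \<otimes> y \<in> FC_centre G" using x y by (auto simp: FC_centre_iff dest: finite_subset)
qed (auto simp: FC_centre_iff)

lemma FC_centre_normal: "FC_centre G \<lhd> G"
  unfolding normal_inv_iff
  using FC_centre_subgroup finite_subset[OF conj_class_conj_subset] by (auto simp: FC_centre_iff)

lemma commute_inv:
  assumes "x \<in> carrier G" "k \<in> carrier G" "x \<otimes> k = k \<otimes> x"
  shows "x \<otimes> inv k = inv k \<otimes> x"
proof -
  have "inv k \<otimes> (x \<otimes> k) \<otimes> inv k = inv k \<otimes> (k \<otimes> x) \<otimes> inv k" using assms(3) by simp
  then show ?thesis using assms(1,2) by (simp add: m_assoc inv_mult_cancel_left)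
qed

lemma commute_mult:
  assumes "x \<in> carrier G" "y \<in> carrier G" "a \<in> carrier G" "x \<otimes> a = a \<otimes> x" "y \<otimes> a = a \<otimes> y"
  shows "(x \<otimes> y) \<otimes> a = a \<otimes> (x \<otimes> y)"
proof -
  have "(x \<otimes> y) \<otimes> a = x \<otimes> (a \<otimes> y)" using assms by (simp add: m_assoc)
  also have "\<dots> = a \<otimes> (x \<otimes> y)" using assms by (simp add: m_assoc[symmetric])
  finally show ?thesis .
qed

lemma commute_generate:
  assumes x: "x \<in> carrier G" and K: "K \<subseteq> carrier G" and comm: "\<And>k. k \<in> K \<Longrightarrow> x \<otimes> k = k \<otimes> x"
    and h: "h \<in> generate G K"
  shows "x \<otimes> h = h \<otimes> x"
  using h
proof (induction h rule: generate.induct)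
  case (inv h)
  then show ?case using commute_inv[OF x] comm K by blast
next
  case (eng h1 h2)
  then have "h1 \<in> carrier G" "h2 \<in> carrier G" using generate_in_carrier[OF K] by auto
  with eng.IH x show ?case by (metis m_assoc)
qed (use x comm in auto)

lemma conj_eq_imp_commute:
  assumes "u \<in> carrier G" "v \<in> carrier G" "c \<in> carrier G" "inv u \<otimes> c \<otimes> u = inv v \<otimes> c \<otimes> v"
  shows "(v \<otimes> inv u) \<otimes> c = c \<otimes> (v \<otimes> inv u)"
proof -
  have "v \<otimes> (inv u \<otimes> c \<otimes> u) \<otimes> inv u = v \<otimes> (inv v \<otimes> c \<otimes> v) \<otimes> inv u" using assms(4) by simp
  then show ?thesis using assms(1-3) by (simp add: m_assoc mult_inv_cancel_left)
qed

end

section \<open>Schur's transfer argument\<close>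

lemma (in comm_group) commutator_eq_one:
  assumes "x \<in> carrier G" "y \<in> carrier G"
  shows "x \<otimes> y \<otimes> inv x \<otimes> inv y = \<one>"
proof -
  have "x \<otimes> y \<otimes> inv x \<otimes> inv y = (x \<otimes> y) \<otimes> inv (x \<otimes> y)"
    using assms by (simp add: m_assoc inv_mult)
  then show ?thesis using assms by simp
qed

locale central_finite_index = group +
  fixes Z :: "'a set"
  assumes Z_subgroup: "subgroup Z G"
    and Z_central: "\<And>z g. z \<in> Z \<Longrightarrow> g \<in> carrier G \<Longrightarrow> z \<otimes> g = g \<otimes> z"
    and finite_index: "finite (rcosets Z)"
begin

abbreviation ZG :: "('a, 'b) monoid_scheme" where
  "ZG \<equiv> G\<lparr>carrier := Z\<rparr>"

lemma ZG_comm_group: "comm_group ZG"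
  using subgroup.subgroup_is_group[OF Z_subgroup is_group] Z_central subgroup.subset[OF Z_subgroup]
  by (intro group.group_comm_groupI) auto

definition rep :: "'a set \<Rightarrow> 'a" where
  "rep C = (SOME x. x \<in> C)"

lemma rep_in:
  assumes "C \<in> rcosets Z"
  shows "rep C \<in> C"
proof -
  obtain x where "x \<in> carrier G" "C = Z #> x" using assms by (auto simp: RCOSETS_def)
  then have "x \<in> C" using rcos_self[OF _ Z_subgroup] by simp
  then show ?thesis unfolding rep_def by (rule someI)
qed

lemma rcosets_subset: "C \<in> rcosets Z \<Longrightarrow> C \<subseteq> carrier G"
  using subgroup.rcosets_carrier[OF Z_subgroup is_group] .

lemma rep_carrier: "C \<in> rcosets Z \<Longrightarrow> rep C \<in> carrier G"
  using rep_in rcosets_subset by blast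

lemma rcosets_mult_closed: "C \<in> rcosets Z \<Longrightarrow> g \<in> carrier G \<Longrightarrow> C #> g \<in> rcosets Z"
  using coset_mult_assoc subgroup.subset[OF Z_subgroup]
  by (auto simp: RCOSETS_def intro!: rcosetsI)

lemma rcos_mult_inv:
  assumes "C \<in> rcosets Z" "g \<in> carrier G"
  shows "(C #> g) #> inv g = C" "(C #> inv g) #> g = C"
  using rcosets_subset[OF assms(1)] assms(2) by (simp_all add: coset_mult_assoc)

lemma bij_betw_rcos_mult: "g \<in> carrier G \<Longrightarrow> bij_betw (\<lambda>C. C #> g) (rcosets Z) (rcosets Z)"
  by (rule bij_betw_byWitness[where f' = "\<lambda>C. C #> inv g"])
     (auto simp: rcos_mult_inv rcosets_mult_closed)

lemma rcos_mult_inv_in_Z: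
  assumes "C \<in> rcosets Z" "u \<in> C" "v \<in> C"
  shows "u \<otimes> inv v \<in> Z"
proof -
  obtain x where x: "x \<in> carrier G" "C = Z #> x" using assms(1) by (auto simp: RCOSETS_def)
  have "Z #> x = Z #> v" using repr_independence[OF _ x(1) Z_subgroup] assms(3) x by simp
  then show ?thesis
    using assms(2) x subgroup.rcos_module_imp[OF Z_subgroup is_group, of v u] rcosets_subset[OF assms(1)]
      assms(3)
    by auto
qed

definition transfer_factor :: "'a set \<Rightarrow> 'a \<Rightarrow> 'a" where
  "transfer_factor C g = rep C \<otimes> g \<otimes> inv (rep (C #> g))"

definition transfer :: "'a \<Rightarrow> 'a" where
  "transfer g = finprod ZG (\<lambda>C. transfer_factor C g) (rcosets Z)"

lemma transfer_factor_in_Z: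
  assumes C: "C \<in> rcosets Z" and g: "g \<in> carrier G"
  shows "transfer_factor C g \<in> Z"
proof -
  have "rep C \<otimes> g \<in> C #> g" using rep_in[OF C] by (auto simp: r_coset_def)
  then show ?thesis
    unfolding transfer_factor_def
    using rcos_mult_inv_in_Z[OF rcosets_mult_closed[OF C g]] rep_in[OF rcosets_mult_closed[OF C g]] by blast
qed

lemma transfer_factor_mult:
  assumes C: "C \<in> rcosets Z" and g: "g \<in> carrier G" and h: "h \<in> carrier G"
  shows "transfer_factor C (g \<otimes> h) = transfer_factor C g \<otimes> transfer_factor (C #> g) h"
  using rep_carrier[OF C] rep_carrier[OF rcosets_mult_closed[OF C g]]
    rep_carrier[OF rcosets_mult_closed[OF C, of "g \<otimes> h"]] g h
  by (simp add: transfer_factor_def coset_mult_assoc[OF rcosets_subset[OF C]] m_assoc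
      inv_mult_cancel_left)

lemma transfer_factor_Z:
  assumes C: "C \<in> rcosets Z" and z: "z \<in> Z"
  shows "transfer_factor C z = z"
proof -
  have zc: "z \<in> carrier G" using z subgroup.subset[OF Z_subgroup] by blast
  obtain x where x: "x \<in> carrier G" "C = Z #> x" using C by (auto simp: RCOSETS_def)
  have "C #> z = Z #> (z \<otimes> x)"
    using x zc Z_central[OF z x(1)] coset_mult_assoc subgroup.subset[OF Z_subgroup] by simp
  also have "\<dots> = C"
    using x zc coset_mult_assoc subgroup.subset[OF Z_subgroup] subgroup.rcos_const[OF Z_subgroup is_group z]
    by (metis)
  finally have "transfer_factor C z = z \<otimes> rep C \<otimes> inv (rep C)"
    using Z_central[OF z rep_carrier[OF C]] by (simp add: transfer_factor_def)
  then show ?thesis using rep_carrier[OF C] zc by (simp add: m_assoc)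
qed

lemma transfer_hom: "transfer \<in> hom G ZG"
proof -
  interpret Z: comm_group ZG by (rule ZG_comm_group)
  have factors: "(\<lambda>C. transfer_factor C g) \<in> rcosets Z \<rightarrow> carrier ZG" if "g \<in> carrier G" for g
    using transfer_factor_in_Z that by auto
  have "transfer (g \<otimes> h) = transfer g \<otimes>\<^bsub>ZG\<^esub> transfer h" if g: "g \<in> carrier G" and h: "h \<in> carrier G" for g h
  proof -
    have "transfer (g \<otimes> h)
        = finprod ZG (\<lambda>C. transfer_factor C g \<otimes>\<^bsub>ZG\<^esub> transfer_factor (C #> g) h) (rcosets Z)"
      unfolding transfer_def using g h
      by (intro Z.finprod_cong')
         (auto simp: transfer_factor_mult intro!: subgroup.m_closed[OF Z_subgroup]
           transfer_factor_in_Z rcosets_mult_closed)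
    also have "\<dots> = transfer g \<otimes>\<^bsub>ZG\<^esub> finprod ZG (\<lambda>C. transfer_factor (C #> g) h) (rcosets Z)"
      unfolding transfer_def using factors[OF g] factors[OF h] rcosets_mult_closed[OF _ g]
      by (intro Z.finprod_multf) auto
    also have "finprod ZG (\<lambda>C. transfer_factor (C #> g) h) (rcosets Z) = transfer h"
      unfolding transfer_def
      using Z.finprod_reindex[OF _ bij_betw_imp_inj_on[OF bij_betw_rcos_mult[OF g]], of "\<lambda>C. transfer_factor C h"]
        bij_betw_imp_surj_on[OF bij_betw_rcos_mult[OF g]] factors[OF h]
      by simp
    finally show ?thesis .
  qed
  moreover have "transfer g \<in> Z" if "g \<in> carrier G" for g
    using Z.finprod_closed[OF factors[OF that]] by (simp add: transfer_def)
  ultimately show ?thesis unfolding hom_def by auto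
qed

lemma transfer_Z: "z \<in> Z \<Longrightarrow> transfer z = z [^] card (rcosets Z)"
proof -
  interpret Z: comm_group ZG by (rule ZG_comm_group)
  assume z: "z \<in> Z"
  have "transfer z = finprod ZG (\<lambda>_. z) (rcosets Z)"
    unfolding transfer_def using z by (intro Z.finprod_cong') (auto simp: transfer_factor_Z)
  also have "\<dots> = z [^] card (rcosets Z)"
    using z by (simp add: Z.finprod_const nat_pow_consistent[symmetric])
  finally show ?thesis .
qed

lemma exists_pow_in_Z:
  assumes g: "g \<in> carrier G"
  obtains k :: nat where "k > 0" "g [^] k \<in> Z"
proof -
  let ?N = "card (rcosets Z)"
  have "(\<lambda>i. Z #> g [^] i) ` {0..?N} \<subseteq> rcosets Z"
    using g subgroup.subset[OF Z_subgroup] by (auto intro: rcosetsI)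
  then have "\<not> inj_on (\<lambda>i. Z #> g [^] i) {0..?N}"
    using card_inj_on_le[of "\<lambda>i. Z #> g [^] i" "{0..?N}" "rcosets Z"] finite_index by auto
  then obtain i j :: nat where ij: "i < j" "Z #> g [^] i = Z #> g [^] j"
    unfolding inj_on_def by (metis atLeastAtMost_iff linorder_neqE_nat)
  have "g [^] j \<in> Z #> g [^] i" using ij(2) rcos_self[OF _ Z_subgroup] g by simp
  then have "g [^] j \<otimes> inv (g [^] i) \<in> Z"
    using subgroup.rcos_module_imp[OF Z_subgroup is_group] g by simp
  moreover have "g [^] j = g [^] (j - i) \<otimes> g [^] i"
    using nat_pow_mult[OF g, of "j - i" i] ij(1) by simp
  then have "g [^] j \<otimes> inv (g [^] i) = g [^] (j - i)" using g by (simp add: m_assoc)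
  ultimately show thesis using that[of "j - i"] ij(1) by simp
qed

theorem commutator_pow_eq_one:
  assumes a: "a \<in> carrier G" and b: "b \<in> carrier G"
  obtains m :: nat where "m > 0" "(a \<otimes> b \<otimes> inv a \<otimes> inv b) [^] m = \<one>"
proof -
  interpret Z: comm_group ZG by (rule ZG_comm_group)
  interpret V: group_hom G ZG transfer
    using transfer_hom Z.is_group by (intro group_hom.intro group_hom_axioms.intro) (auto intro: is_group)
  let ?c = "a \<otimes> b \<otimes> inv a \<otimes> inv b"
  have c: "?c \<in> carrier G" using a b by simp
  obtain k :: nat where k: "k > 0" "?c [^] k \<in> Z" using exists_pow_in_Z[OF c] by blast
  have "transfer ?c = \<one>"
    using a b Z.commutator_eq_one[OF V.hom_closed[OF a] V.hom_closed[OF b]] by simp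
  then have "transfer (?c [^] k) = \<one>" using V.hom_nat_pow[OF c, of k] Z.nat_pow_one[of k] by simp
  moreover have "transfer (?c [^] k) = ?c [^] (k * card (rcosets Z))"
    using transfer_Z[OF k(2)] c by (simp add: nat_pow_pow)
  moreover have "card (rcosets Z) > 0"
    using finite_index rcosetsI[OF subgroup.subset[OF Z_subgroup] one_closed] by (auto simp: card_gt_0_iff)
  ultimately show thesis using that[of "k * card (rcosets Z)"] k(1) by simp
qed

end

lemma finite_image_if_factors:
  assumes fin: "finite (g ` A)" and factor: "\<And>x y. x \<in> A \<Longrightarrow> y \<in> A \<Longrightarrow> g x = g y \<Longrightarrow> f x = f y"
  shows "finite (f ` A)"
proof -
  have "f ` A \<subseteq> (\<lambda>v. f (SOME x. x \<in> A \<and> g x = v)) ` (g ` A)"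
  proof
    fix w assume "w \<in> f ` A"
    then obtain x where x: "x \<in> A" "w = f x" by blast
    define y where "y = (SOME y. y \<in> A \<and> g y = g x)"
    have "y \<in> A \<and> g y = g x" unfolding y_def by (rule someI[of _ x]) (simp add: x)
    then have "w = f y" using x factor[of x y] by simp
    then show "w \<in> (\<lambda>v. f (SOME x. x \<in> A \<and> g x = v)) ` (g ` A)"
      by (intro image_eqI[where x = "g x"]) (simp_all add: y_def x)
  qed
  then show ?thesis using fin finite_subset by blast
qed

context group
begin

lemma rcosets_carrier_update: "rcosets\<^bsub>G\<lparr>carrier := H\<rparr>\<^esub> Z = (\<lambda>h. Z #> h) ` H"
proof -
  have "Z #>\<^bsub>G\<lparr>carrier := H\<rparr>\<^esub> h = Z #> h" for h by (simp add: r_coset_def)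
  then show ?thesis by (simp add: RCOSETS_def UNION_singleton_eq_range)
qed

lemma centralizer_pair_subgroup:
  assumes H: "subgroup H G" and ab: "a \<in> carrier G" "b \<in> carrier G"
  shows "subgroup {z \<in> H. z \<otimes> a = a \<otimes> z \<and> z \<otimes> b = b \<otimes> z} G" (is "subgroup ?Z G")
proof (rule subgroupI)
  show "?Z \<subseteq> carrier G" using subgroup.subset[OF H] by auto
  have "\<one> \<in> ?Z" using subgroup.one_closed[OF H] ab by simp
  then show "?Z \<noteq> {}" by blast
next
  fix z w assume z: "z \<in> ?Z" and w: "w \<in> ?Z"
  then have zw: "z \<in> carrier G" "w \<in> carrier G" using subgroup.subset[OF H] by auto
  show "inv z \<in> ?Z"
    using z commute_inv[OF ab(1) zw(1)] commute_inv[OF ab(2) zw(1)] subgroup.m_inv_closed[OF H] by auto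
  show "z \<otimes> w \<in> ?Z"
    using z w zw ab subgroup.m_closed[OF H] commute_mult by simp
qed

lemma FC_centralizer_finite_index:
  assumes a: "a \<in> FC_centre G" and b: "b \<in> FC_centre G"
  defines "H \<equiv> generate G {a, b}"
  shows "central_finite_index (G\<lparr>carrier := H\<rparr>) {z \<in> H. z \<otimes> a = a \<otimes> z \<and> z \<otimes> b = b \<otimes> z}"
    (is "central_finite_index ?H ?Z")
proof -
  have ab: "a \<in> carrier G" "b \<in> carrier G" using a b by (simp_all add: FC_centre_iff)
  have H: "subgroup H G" unfolding H_def using ab by (intro generate_is_subgroup) auto
  have Z: "subgroup ?Z G" using centralizer_pair_subgroup[OF H ab] .
  have central: "z \<otimes> h = h \<otimes> z" if "z \<in> ?Z" "h \<in> H" for z h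
    by (rule commute_generate[where K = "{a, b}"])
       (use that ab subgroup.subset[OF H] in \<open>auto simp: H_def\<close>)
  let ?conj = "\<lambda>h. (inv h \<otimes> a \<otimes> h, inv h \<otimes> b \<otimes> h)"
  have "finite (?conj ` H)"
  proof (rule finite_subset)
    show "?conj ` H \<subseteq> conj_class a \<times> conj_class b"
    proof (rule image_subsetI)
      fix h assume "h \<in> H"
      then show "?conj h \<in> conj_class a \<times> conj_class b"
        using conj_class_memI subgroup.subset[OF H] by auto
    qed
    show "finite (conj_class a \<times> conj_class b)" using a b by (simp add: FC_centre_iff)
  qed
  moreover have "?Z #> h = ?Z #> h'" if "h \<in> H" "h' \<in> H" "?conj h = ?conj h'" for h h'
  proof -
    have hh': "h \<in> carrier G" "h' \<in> carrier G" using that subgroup.subset[OF H] by auto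
    have "h' \<otimes> inv h \<in> H" using that subgroup.m_closed[OF H] subgroup.m_inv_closed[OF H] by blast
    then have "h' \<otimes> inv h \<in> ?Z" using conj_eq_imp_commute[OF hh'] that(3) ab by simp
    then have "h' \<in> ?Z #> h" using subgroup.rcos_module_rev[OF Z is_group hh'] by simp
    then show ?thesis using repr_independence[OF _ hh'(1) Z] by simp
  qed
  ultimately have "finite ((\<lambda>h. ?Z #> h) ` H)" by (rule finite_image_if_factors)
  moreover have "rcosets\<^bsub>?H\<^esub> ?Z = (\<lambda>h. ?Z #> h) ` H" by (rule rcosets_carrier_update)
  ultimately have "finite (rcosets\<^bsub>?H\<^esub> ?Z)" by simp
  moreover have "subgroup ?Z ?H" by (rule subgroup_incl[OF Z H]) blast
  moreover have "z \<otimes>\<^bsub>?H\<^esub> h = h \<otimes>\<^bsub>?H\<^esub> z" if "z \<in> ?Z" "h \<in> carrier ?H" for z h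
    using central[OF that(1)] that(2) by simp
  ultimately show ?thesis
    using subgroup.subgroup_is_group[OF H is_group]
    unfolding central_finite_index_def central_finite_index_axioms_def by blast
qed

lemma FC_centre_commute:
  assumes "torsion_free G" and a: "a \<in> FC_centre G" and b: "b \<in> FC_centre G"
  shows "a \<otimes> b = b \<otimes> a"
proof -
  let ?H = "generate G {a, b}" and ?c = "a \<otimes> b \<otimes> inv a \<otimes> inv b"
  have ab: "a \<in> carrier G" "b \<in> carrier G" using a b by (simp_all add: FC_centre_iff)
  have H: "subgroup ?H G" using ab by (intro generate_is_subgroup) auto
  have ab_H: "a \<in> ?H" "b \<in> ?H" by (auto intro: generate.incl)
  obtain m :: nat where "m > 0" "?c [^] m = \<one>"
    using central_finite_index.commutator_pow_eq_one[OF FC_centralizer_finite_index[OF a b], of a b]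
      ab_H H
    by (auto simp: nat_pow_consistent[symmetric])
  then have "?c = \<one>" using assms(1) ab unfolding torsion_free_def by auto
  moreover have "a \<otimes> b = ?c \<otimes> (b \<otimes> a)" using ab by (simp add: m_assoc inv_mult_cancel_left)
  ultimately show ?thesis using ab by simp
qed

end

section \<open>The Hilbert space \<open>l2 G\<close>\<close>

definition abs_sq :: "('x \<Rightarrow> complex) \<Rightarrow> 'x \<Rightarrow> real" where
  "abs_sq \<xi> = (\<lambda>x. (cmod (\<xi> x))\<^sup>2)"

lemma abs_sq_nonneg [simp]: "abs_sq \<xi> x \<ge> 0"
  by (simp add: abs_sq_def)

lemma l2_iff: "\<xi> \<in> l2 G \<longleftrightarrow> (\<forall>x. x \<notin> carrier G \<longrightarrow> \<xi> x = 0) \<and> abs_sq \<xi> summable_on carrier G"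
  by (simp add: l2_def abs_sq_def)

lemma l2norm_abs_sq: "l2norm G \<xi> = sqrt (infsum (abs_sq \<xi>) (carrier G))"
  by (simp add: l2norm_def abs_sq_def)

lemma l2norm_nonneg [simp]: "l2norm G \<xi> \<ge> 0"
  using infsum_nonneg[of "carrier G" "abs_sq \<xi>"] by (simp add: l2norm_abs_sq)

lemma power2_l2norm: "(l2norm G \<xi>)\<^sup>2 = infsum (abs_sq \<xi>) (carrier G)"
  using infsum_nonneg[of "carrier G" "abs_sq \<xi>"] by (simp add: l2norm_abs_sq)

lemma l2_vanishes: "\<xi> \<in> l2 G \<Longrightarrow> x \<notin> carrier G \<Longrightarrow> \<xi> x = 0"
  by (simp add: l2_def)

lemma L2_set_le_l2norm:
  assumes "\<xi> \<in> l2 G" "finite F" "F \<subseteq> carrier G"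
  shows "L2_set (\<lambda>x. cmod (\<xi> x)) F \<le> l2norm G \<xi>"
proof -
  have "sum (abs_sq \<xi>) F \<le> infsum (abs_sq \<xi>) (carrier G)"
    using assms by (intro finite_sum_le_infsum) (auto simp: l2_iff)
  then show ?thesis by (simp add: L2_set_def l2norm_abs_sq abs_sq_def)
qed

lemma l2I_bounded:
  assumes "\<And>x. x \<notin> carrier G \<Longrightarrow> \<xi> x = 0"
    and "\<And>F. finite F \<Longrightarrow> F \<subseteq> carrier G \<Longrightarrow> L2_set (\<lambda>x. cmod (\<xi> x)) F \<le> b"
  shows "\<xi> \<in> l2 G" "l2norm G \<xi> \<le> b"
proof -
  have b: "b \<ge> 0" using assms(2)[of "{}"] by simp
  have finite_sums: "sum (abs_sq \<xi>) F \<le> b\<^sup>2" if "finite F" "F \<subseteq> carrier G" for F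
  proof -
    have "sqrt (sum (abs_sq \<xi>) F) \<le> b"
      using assms(2)[OF that] by (simp add: L2_set_def abs_sq_def)
    then show ?thesis by (simp add: sum_nonneg real_sqrt_le_iff real_sqrt_le_mono sqrt_le_D)
  qed
  have summable: "abs_sq \<xi> summable_on carrier G"
    using finite_sums by (intro nonneg_bdd_above_summable_on bdd_aboveI[where M = "b\<^sup>2"]) auto
  then show "\<xi> \<in> l2 G" using assms(1) by (simp add: l2_iff)
  have "infsum (abs_sq \<xi>) (carrier G) \<le> b\<^sup>2"
    using summable finite_sums by (rule infsum_le_finite_sums)
  then show "l2norm G \<xi> \<le> b" using b by (simp add: l2norm_abs_sq real_sqrt_le_iff real_le_lsqrt)
qed

lemma l2_zero [simp]: "(\<lambda>_. 0) \<in> l2 G" "l2norm G (\<lambda>_. 0) = 0"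
  by (auto simp: l2_def l2norm_def)

lemma l2_scale:
  assumes "\<xi> \<in> l2 G"
  shows "(\<lambda>x. c * \<xi> x) \<in> l2 G" "l2norm G (\<lambda>x. c * \<xi> x) = cmod c * l2norm G \<xi>"
proof -
  have abs_sq_scale: "abs_sq (\<lambda>x. c * \<xi> x) = (\<lambda>x. (cmod c)\<^sup>2 * abs_sq \<xi> x)"
    by (auto simp: abs_sq_def norm_mult power_mult_distrib)
  show "(\<lambda>x. c * \<xi> x) \<in> l2 G"
    using assms unfolding l2_iff abs_sq_scale by (auto intro: summable_on_cmult_right)
  show "l2norm G (\<lambda>x. c * \<xi> x) = cmod c * l2norm G \<xi>"
    unfolding l2norm_abs_sq abs_sq_scale infsum_cmult_right' by (simp add: real_sqrt_mult)
qed

lemma l2_add: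
  assumes "\<xi> \<in> l2 G" "\<eta> \<in> l2 G"
  shows "(\<lambda>x. \<xi> x + \<eta> x) \<in> l2 G" "l2norm G (\<lambda>x. \<xi> x + \<eta> x) \<le> l2norm G \<xi> + l2norm G \<eta>"
proof -
  have "L2_set (\<lambda>x. cmod (\<xi> x + \<eta> x)) F \<le> l2norm G \<xi> + l2norm G \<eta>"
    if "finite F" "F \<subseteq> carrier G" for F
  proof -
    have "L2_set (\<lambda>x. cmod (\<xi> x + \<eta> x)) F \<le> L2_set (\<lambda>x. cmod (\<xi> x) + cmod (\<eta> x)) F"
      by (intro L2_set_mono norm_triangle_ineq) auto
    also have "\<dots> \<le> L2_set (\<lambda>x. cmod (\<xi> x)) F + L2_set (\<lambda>x. cmod (\<eta> x)) F"
      by (rule L2_set_triangle_ineq)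
    also have "\<dots> \<le> l2norm G \<xi> + l2norm G \<eta>"
      using L2_set_le_l2norm[OF assms(1) that] L2_set_le_l2norm[OF assms(2) that] by simp
    finally show ?thesis .
  qed
  moreover have "\<And>x. x \<notin> carrier G \<Longrightarrow> \<xi> x + \<eta> x = 0"
    using assms by (simp add: l2_vanishes)
  ultimately show "(\<lambda>x. \<xi> x + \<eta> x) \<in> l2 G" "l2norm G (\<lambda>x. \<xi> x + \<eta> x) \<le> l2norm G \<xi> + l2norm G \<eta>"
    using l2I_bounded[of G "\<lambda>x. \<xi> x + \<eta> x"] by auto
qed

lemma l2_diff:
  assumes "\<xi> \<in> l2 G" "\<eta> \<in> l2 G"
  shows "(\<lambda>x. \<xi> x - \<eta> x) \<in> l2 G" "l2norm G (\<lambda>x. \<xi> x - \<eta> x) \<le> l2norm G \<xi> + l2norm G \<eta>"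
  using l2_add[OF assms(1) l2_scale(1)[OF assms(2), of "-1"]] l2_scale(2)[OF assms(2), of "-1"]
  by simp_all

lemma l2norm_le_diff_add:
  assumes "\<xi> \<in> l2 G" "\<eta> \<in> l2 G"
  shows "l2norm G \<xi> \<le> l2norm G (\<lambda>x. \<xi> x - \<eta> x) + l2norm G \<eta>"
  using l2_add(2)[OF l2_diff(1)[OF assms] assms(2)] by simp

lemma l2_sum:
  assumes "finite S" "\<And>i. i \<in> S \<Longrightarrow> \<xi> i \<in> l2 G"
  shows "(\<lambda>x. \<Sum>i\<in>S. \<xi> i x) \<in> l2 G \<and> l2norm G (\<lambda>x. \<Sum>i\<in>S. \<xi> i x) \<le> (\<Sum>i\<in>S. l2norm G (\<xi> i))"
  using assms
proof (induction S rule: finite_induct)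
  case (insert a S)
  then have "(\<lambda>x. \<Sum>i\<in>S. \<xi> i x) \<in> l2 G" "l2norm G (\<lambda>x. \<Sum>i\<in>S. \<xi> i x) \<le> (\<Sum>i\<in>S. l2norm G (\<xi> i))"
    "\<xi> a \<in> l2 G"
    by blast+
  with l2_add[of "\<xi> a" G "\<lambda>x. \<Sum>i\<in>S. \<xi> i x"] insert.hyps show ?case by simp
qed simp

lemma abs_le_l2norm:
  assumes "\<xi> \<in> l2 G"
  shows "cmod (\<xi> x) \<le> l2norm G \<xi>"
proof (cases "x \<in> carrier G")
  case True
  then show ?thesis using L2_set_le_l2norm[OF assms, of "{x}"] by simp
qed (use assms in \<open>simp add: l2_vanishes\<close>)

lemma le_zero_if_le_eps_mult:
  fixes r K :: real
  assumes "K \<ge> 0" "\<And>e. e > 0 \<Longrightarrow> r \<le> e * K"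
  shows "r \<le> 0"
proof (rule field_le_epsilon)
  fix e :: real assume e: "e > 0"
  have "r \<le> e / (K + 1) * K" using assms(2)[of "e / (K + 1)"] e assms(1) by simp
  also have "\<dots> \<le> e" using e assms(1) by (simp add: field_simps)
  finally show "r \<le> 0 + e" by simp
qed

lemma l2_eq_zeroI:
  assumes "\<xi> \<in> l2 G" "\<And>e. e > 0 \<Longrightarrow> l2norm G \<xi> \<le> e * K" "K \<ge> 0"
  shows "\<xi> = (\<lambda>_. 0)"
proof
  fix x
  have "cmod (\<xi> x) \<le> 0"
    using abs_le_l2norm[OF assms(1), of x] le_zero_if_le_eps_mult[OF assms(3,2)] by linarith
  then show "\<xi> x = 0" by simp
qed

lemma l2_comp_bij:
  assumes f: "bij_betw f (carrier G) (carrier G)" and \<xi>: "\<xi> \<in> l2 G"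
  defines "\<eta> \<equiv> \<lambda>x. if x \<in> carrier G then \<xi> (f x) else 0"
  shows "\<eta> \<in> l2 G" "l2norm G \<eta> = l2norm G \<xi>"
proof -
  have abs_sq_\<eta>: "abs_sq \<eta> x = abs_sq \<xi> (f x)" if "x \<in> carrier G" for x
    using that by (simp add: abs_sq_def \<eta>_def)
  have "abs_sq \<eta> summable_on carrier G"
    using summable_on_reindex_bij_betw[OF f, of "abs_sq \<xi>"] \<xi> abs_sq_\<eta>
    by (simp add: l2_iff cong: summable_on_cong)
  then show "\<eta> \<in> l2 G" by (simp add: l2_iff \<eta>_def)
  have "infsum (abs_sq \<eta>) (carrier G) = infsum (abs_sq \<xi>) (carrier G)"
    using infsum_reindex_bij_betw[OF f, of "abs_sq \<xi>"] abs_sq_\<eta> by (simp cong: infsum_cong)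
  then show "l2norm G \<eta> = l2norm G \<xi>" by (simp add: l2norm_abs_sq)
qed

definition supp :: "('x \<Rightarrow> complex) \<Rightarrow> 'x set" where
  "supp p = {x. p x \<noteq> 0}"

definition l1norm :: "('x \<Rightarrow> complex) \<Rightarrow> real" where
  "l1norm p = (\<Sum>y\<in>supp p. cmod (p y))"

definition dirac :: "'x \<Rightarrow> 'x \<Rightarrow> complex" where
  "dirac h = (\<lambda>x. if x = h then 1 else 0)"

lemma finsupp_iff: "finsupp G p \<longleftrightarrow> finite (supp p) \<and> supp p \<subseteq> carrier G"
  by (simp add: finsupp_def supp_def)

lemma supp_dirac [simp]: "supp (dirac h) = {h}"
  by (auto simp: supp_def dirac_def)

lemma finsupp_dirac: "h \<in> carrier G \<Longrightarrow> finsupp G (dirac h)"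
  by (simp add: finsupp_iff)

lemma l2_dirac:
  assumes "h \<in> carrier G"
  shows "dirac h \<in> l2 G"
proof (rule l2I_bounded(1)[where b = 1])
  fix F :: "'a set" assume "finite F"
  have "(cmod (dirac h x))\<^sup>2 = (if x = h then 1 else 0)" for x
    by (simp add: dirac_def)
  then have "(\<Sum>x\<in>F. (cmod (dirac h x))\<^sup>2) \<le> 1"
    using \<open>finite F\<close> by (simp add: sum.delta')
  then show "L2_set (\<lambda>x. cmod (dirac h x)) F \<le> 1" by (simp add: L2_set_def)
qed (use assms in \<open>auto simp: dirac_def\<close>)

definition proj_on :: "'x set \<Rightarrow> ('x \<Rightarrow> complex) \<Rightarrow> ('x \<Rightarrow> complex)" where
  "proj_on C \<xi> = (\<lambda>y. if y \<in> C then \<xi> y else 0)"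

lemma proj_on_l2:
  assumes "\<xi> \<in> l2 G"
  shows "proj_on C \<xi> \<in> l2 G" "l2norm G (proj_on C \<xi>) \<le> l2norm G \<xi>"
proof -
  have "L2_set (\<lambda>x. cmod (proj_on C \<xi> x)) F \<le> l2norm G \<xi>" if "finite F" "F \<subseteq> carrier G" for F
  proof -
    have "L2_set (\<lambda>x. cmod (proj_on C \<xi> x)) F \<le> L2_set (\<lambda>x. cmod (\<xi> x)) F"
      by (rule L2_set_mono) (auto simp: proj_on_def)
    also have "\<dots> \<le> l2norm G \<xi>" using L2_set_le_l2norm[OF assms that] .
    finally show ?thesis .
  qed
  moreover have "\<And>x. x \<notin> carrier G \<Longrightarrow> proj_on C \<xi> x = 0"
    using assms by (simp add: proj_on_def l2_vanishes)
  ultimately show "proj_on C \<xi> \<in> l2 G" "l2norm G (proj_on C \<xi>) \<le> l2norm G \<xi>"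
    using l2I_bounded[of G "proj_on C \<xi>"] by auto
qed

lemma power2_l2norm_proj_on:
  assumes "\<xi> \<in> l2 G" "C \<subseteq> carrier G"
  shows "(l2norm G (proj_on C \<xi>))\<^sup>2 = infsum (abs_sq \<xi>) C"
  unfolding power2_l2norm
  by (rule infsum_cong_neutral) (use assms in \<open>auto simp: proj_on_def abs_sq_def\<close>)

lemma l2_finite_approx:
  assumes \<xi>: "\<xi> \<in> l2 G" and e: "e > 0"
  obtains F where "finite F" "F \<subseteq> carrier G" "l2norm G (\<lambda>x. \<xi> x - proj_on F \<xi> x) \<le> e"
proof -
  have summable: "abs_sq \<xi> summable_on carrier G" using \<xi> by (simp add: l2_iff)
  obtain F where F: "finite F" "F \<subseteq> carrier G"
    and close: "dist (sum (abs_sq \<xi>) F) (infsum (abs_sq \<xi>) (carrier G)) \<le> e\<^sup>2"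
    using infsum_finite_approximation[OF summable, of "e\<^sup>2"] e by auto
  have "L2_set (\<lambda>x. cmod (\<xi> x - proj_on F \<xi> x)) F' \<le> e" if F': "finite F'" "F' \<subseteq> carrier G" for F'
  proof -
    have "(\<Sum>x\<in>F'. (cmod (\<xi> x - proj_on F \<xi> x))\<^sup>2) = sum (abs_sq \<xi>) (F' - F)"
      using F' by (intro sum.mono_neutral_cong_right) (auto simp: proj_on_def abs_sq_def)
    also have "\<dots> = sum (abs_sq \<xi>) (F' \<union> F) - sum (abs_sq \<xi>) F"
      using F'(1) F(1) sum.union_disjoint[of "F' - F" F "abs_sq \<xi>"]
      by (simp add: Int_commute Diff_disjoint)
    also have "\<dots> \<le> e\<^sup>2"
      using finite_sum_le_infsum[OF summable, of "F' \<union> F"] F F' close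
      by (auto simp: dist_real_def)
    finally show ?thesis using e by (simp add: L2_set_def real_sqrt_le_iff real_le_lsqrt sum_nonneg)
  qed
  moreover have "\<And>x. x \<notin> carrier G \<Longrightarrow> \<xi> x - proj_on F \<xi> x = 0"
    using \<xi> F(2) by (auto simp: proj_on_def l2_vanishes)
  ultimately show thesis
    using that[OF F] l2I_bounded(2)[of G "\<lambda>x. \<xi> x - proj_on F \<xi> x"] by blast
qed

lemma sum_power2_l2norm_proj_on_le:
  assumes \<xi>: "\<xi> \<in> l2 G" and "finite \<C>" "\<And>C. C \<in> \<C> \<Longrightarrow> C \<subseteq> carrier G" "pairwise disjnt \<C>"
  shows "(\<Sum>C\<in>\<C>. (l2norm G (proj_on C \<xi>))\<^sup>2) \<le> (l2norm G \<xi>)\<^sup>2"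
proof -
  have summable: "abs_sq \<xi> summable_on carrier G" using \<xi> by (simp add: l2_iff)
  have "(\<Sum>C\<in>\<C>. (l2norm G (proj_on C \<xi>))\<^sup>2) = (\<Sum>C\<in>\<C>. infsum (abs_sq \<xi>) C)"
    using assms by (simp add: power2_l2norm_proj_on)
  also have "\<dots> = infsum (abs_sq \<xi>) (\<Union>\<C>)"
    using sum_infsum[of \<C> "abs_sq \<xi>" "\<lambda>C. C"] assms summable_on_subset_banach[OF summable]
    by (auto simp: pairwise_def disjnt_def)
  also have "\<dots> \<le> infsum (abs_sq \<xi>) (carrier G)"
    using assms summable by (intro infsum_mono2 summable_on_subset_banach[OF summable]) auto
  finally show ?thesis by (simp add: power2_l2norm)
qed

lemma l2_cellwise_bounded:
  fixes cell :: "'a \<Rightarrow> 'a set"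
  assumes cell: "\<And>x. x \<in> carrier G \<Longrightarrow> cell x \<subseteq> carrier G"
    and disjoint: "\<And>x x'. x \<in> carrier G \<Longrightarrow> x' \<in> carrier G \<Longrightarrow> cell x \<noteq> cell x' \<Longrightarrow> cell x \<inter> cell x' = {}"
    and D: "\<And>\<eta>. \<eta> \<in> l2 G \<Longrightarrow> D \<eta> \<in> l2 G" "\<And>\<eta>. \<eta> \<in> l2 G \<Longrightarrow> l2norm G (D \<eta>) \<le> K * l2norm G \<eta>"
    and K: "K \<ge> 0" and \<xi>: "\<xi> \<in> l2 G"
  defines "E \<equiv> \<lambda>x. if x \<in> carrier G then D (proj_on (cell x) \<xi>) x else 0"
  shows "E \<in> l2 G" "l2norm G E \<le> K * l2norm G \<xi>"
proof -
  have "L2_set (\<lambda>x. cmod (E x)) F \<le> K * l2norm G \<xi>" if F: "finite F" "F \<subseteq> carrier G" for F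
  proof -
    let ?q = "\<lambda>x. (cmod (E x))\<^sup>2"
    have cell_sum: "sum ?q {x \<in> F. cell x = C} \<le> (K * l2norm G (proj_on C \<xi>))\<^sup>2" for C
    proof -
      have P: "proj_on C \<xi> \<in> l2 G" using proj_on_l2(1)[OF \<xi>] .
      have "sum ?q {x \<in> F. cell x = C} = sum (abs_sq (D (proj_on C \<xi>))) {x \<in> F. cell x = C}"
        using F(2) by (intro sum.cong) (auto simp: abs_sq_def E_def)
      also have "\<dots> \<le> (l2norm G (D (proj_on C \<xi>)))\<^sup>2"
        unfolding power2_l2norm using D(1)[OF P] F
        by (intro finite_sum_le_infsum) (auto simp: l2_iff)
      also have "\<dots> \<le> (K * l2norm G (proj_on C \<xi>))\<^sup>2"
        using D(2)[OF P] by (intro power_mono) auto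
      finally show ?thesis .
    qed
    have "sum ?q F = (\<Sum>C\<in>cell ` F. sum ?q {x \<in> F. cell x = C})"
      using F(1) by (rule sum.image_gen)
    also have "\<dots> \<le> (\<Sum>C\<in>cell ` F. K\<^sup>2 * (l2norm G (proj_on C \<xi>))\<^sup>2)"
      using cell_sum by (intro sum_mono) (simp add: power_mult_distrib)
    also have "\<dots> \<le> K\<^sup>2 * (l2norm G \<xi>)\<^sup>2"
    proof -
      have "pairwise disjnt (cell ` F)"
        by (rule pairwise_imageI) (use F(2) disjoint in \<open>metis disjnt_def subsetD\<close>)
      then show ?thesis
        unfolding sum_distrib_left[symmetric] using F cell
        by (intro mult_left_mono sum_power2_l2norm_proj_on_le[OF \<xi>]) auto
    qed
    finally have "sum ?q F \<le> (K * l2norm G \<xi>)\<^sup>2" by (simp add: power_mult_distrib)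
    then show ?thesis using K by (simp add: L2_set_def real_sqrt_le_iff real_le_lsqrt sum_nonneg)
  qed
  then show "E \<in> l2 G" "l2norm G E \<le> K * l2norm G \<xi>"
    using l2I_bounded[of G E] by (auto simp: E_def)
qed

section \<open>Operators in the reduced group C*-algebra\<close>

context group
begin

definition ltrans :: "'a \<Rightarrow> ('a \<Rightarrow> complex) \<Rightarrow> ('a \<Rightarrow> complex)" where
  "ltrans g \<xi> = (\<lambda>x. if x \<in> carrier G then \<xi> (inv g \<otimes> x) else 0)"

definition rtrans :: "'a \<Rightarrow> ('a \<Rightarrow> complex) \<Rightarrow> ('a \<Rightarrow> complex)" where
  "rtrans h \<xi> = (\<lambda>x. if x \<in> carrier G then \<xi> (x \<otimes> h) else 0)"

lemma bij_betw_mult_left: "g \<in> carrier G \<Longrightarrow> bij_betw (\<lambda>x. g \<otimes> x) (carrier G) (carrier G)"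
  by (rule bij_betw_byWitness[where f' = "\<lambda>x. inv g \<otimes> x"]) (auto simp: m_assoc[symmetric])

lemma bij_betw_mult_right: "h \<in> carrier G \<Longrightarrow> bij_betw (\<lambda>x. x \<otimes> h) (carrier G) (carrier G)"
  by (rule bij_betw_byWitness[where f' = "\<lambda>x. x \<otimes> inv h"]) (auto simp: m_assoc)

lemma ltrans_l2:
  assumes "g \<in> carrier G" "\<xi> \<in> l2 G"
  shows "ltrans g \<xi> \<in> l2 G" "l2norm G (ltrans g \<xi>) = l2norm G \<xi>"
  using l2_comp_bij[OF bij_betw_mult_left[of "inv g"] assms(2)] assms(1)
  by (simp_all add: ltrans_def)

lemma rtrans_l2:
  assumes "h \<in> carrier G" "\<xi> \<in> l2 G"
  shows "rtrans h \<xi> \<in> l2 G" "l2norm G (rtrans h \<xi>) = l2norm G \<xi>"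
  using l2_comp_bij[OF bij_betw_mult_right[OF assms(1)] assms(2)]
  by (simp_all add: rtrans_def)

lemma ltrans_ltrans:
  "g \<in> carrier G \<Longrightarrow> h \<in> carrier G \<Longrightarrow> ltrans g (ltrans h \<xi>) = ltrans (g \<otimes> h) \<xi>"
  by (auto simp: ltrans_def inv_mult_group m_assoc)

lemma ltrans_one: "\<xi> \<in> l2 G \<Longrightarrow> ltrans \<one> \<xi> = \<xi>"
  by (auto simp: ltrans_def l2_vanishes)

lemma ltrans_dirac: "g \<in> carrier G \<Longrightarrow> ltrans g (dirac \<one>) = dirac g"
  by (auto simp: fun_eq_iff ltrans_def dirac_def) (metis inv_closed inv_equality inv_inv l_inv)

lemma rtrans_dirac: "h \<in> carrier G \<Longrightarrow> rtrans (inv h) (dirac \<one>) = dirac h"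
  by (auto simp: fun_eq_iff rtrans_def dirac_def) (metis inv_closed inv_equality inv_inv r_inv)

lemma lreg_eq_sum:
  assumes "finsupp G p" "\<xi> \<in> l2 G"
  shows "lreg G p \<xi> = (\<lambda>x. \<Sum>y\<in>supp p. p y * ltrans y \<xi> x)"
  using assms(2) by (auto simp: fun_eq_iff lreg_def ltrans_def supp_def)

lemma lreg_outside_l2: "\<xi> \<notin> l2 G \<Longrightarrow> lreg G p \<xi> = (\<lambda>_. 0)"
  by (simp add: lreg_def)

lemma lreg_l2:
  assumes p: "finsupp G p" and \<xi>: "\<xi> \<in> l2 G"
  shows "lreg G p \<xi> \<in> l2 G" "l2norm G (lreg G p \<xi>) \<le> l1norm p * l2norm G \<xi>"
proof -
  have fin_supp: "finite (supp p)" "supp p \<subseteq> carrier G" using p by (auto simp: finsupp_iff)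
  have summand: "(\<lambda>x. p y * ltrans y \<xi> x) \<in> l2 G"
    "l2norm G (\<lambda>x. p y * ltrans y \<xi> x) = cmod (p y) * l2norm G \<xi>" if "y \<in> supp p" for y
    using l2_scale[OF ltrans_l2(1)] ltrans_l2(2) that fin_supp \<xi> by auto
  show "lreg G p \<xi> \<in> l2 G" "l2norm G (lreg G p \<xi>) \<le> l1norm p * l2norm G \<xi>"
    using l2_sum[OF fin_supp(1), of "\<lambda>y x. p y * ltrans y \<xi> x" G] summand
    by (simp_all add: lreg_eq_sum[OF p \<xi>] l1norm_def sum_distrib_right)
qed

lemma lreg_lincomb:
  assumes p: "finsupp G p" and "\<xi> \<in> l2 G" "\<eta> \<in> l2 G"
  shows "lreg G p (\<lambda>x. c * \<xi> x + \<eta> x) = (\<lambda>x. c * lreg G p \<xi> x + lreg G p \<eta> x)"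
proof
  fix x
  show "lreg G p (\<lambda>x. c * \<xi> x + \<eta> x) x = c * lreg G p \<xi> x + lreg G p \<eta> x"
    using assms l2_add(1)[OF l2_scale(1)[OF assms(2)] assms(3)]
    by (cases "x \<in> carrier G")
       (simp_all add: lreg_eq_sum ltrans_def sum.distrib sum_distrib_left algebra_simps)
qed

lemma lreg_rtrans:
  assumes p: "finsupp G p" and \<xi>: "\<xi> \<in> l2 G" and h: "h \<in> carrier G"
  shows "lreg G p (rtrans h \<xi>) = rtrans h (lreg G p \<xi>)"
  unfolding lreg_eq_sum[OF p rtrans_l2(1)[OF h \<xi>]] lreg_eq_sum[OF p \<xi>]
  using p h by (auto simp: fun_eq_iff finsupp_iff rtrans_def ltrans_def m_assoc subset_iff
      intro!: sum.cong)

lemma lreg_zero: "lreg G p (\<lambda>_. 0) = (\<lambda>_. 0)"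
  by (auto simp: lreg_def)

lemma ug_eq_ltrans: "g \<in> carrier G \<Longrightarrow> \<xi> \<in> l2 G \<Longrightarrow> ug G g \<xi> = ltrans g \<xi>"
  using lreg_eq_sum[OF finsupp_dirac, of g \<xi>] by (simp add: ug_def dirac_def[symmetric])
    (simp add: dirac_def)

lemma lreg_in_cstar_of:
  assumes "finsupp G p" "supp p \<subseteq> B"
  shows "lreg G p \<in> cstar_of G B"
  using assms lreg_l2(1)[OF assms(1)]
  by (auto simp: cstar_of_def op_close_def supp_def lreg_outside_l2 intro!: exI[of _ p])

lemma ug_in_Cred: "g \<in> carrier G \<Longrightarrow> ug G g \<in> Cred G"
  unfolding ug_def Cred_def dirac_def[symmetric] by (rule lreg_in_cstar_of) (auto simp: finsupp_dirac)

lemma cstar_of_l2: "T \<in> cstar_of G B \<Longrightarrow> \<xi> \<in> l2 G \<Longrightarrow> T \<xi> \<in> l2 G"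
  by (simp add: cstar_of_def)

lemma cstar_of_outside_l2: "T \<in> cstar_of G B \<Longrightarrow> \<xi> \<notin> l2 G \<Longrightarrow> T \<xi> = (\<lambda>_. 0)"
  by (simp add: cstar_of_def)

lemma cstar_of_mono: "B \<subseteq> B' \<Longrightarrow> cstar_of G B \<subseteq> cstar_of G B'"
  unfolding cstar_of_def by blast

lemma cstar_of_approx:
  assumes T: "T \<in> cstar_of G B" and "e > 0"
  obtains p where "finsupp G p" "supp p \<subseteq> B"
    "\<And>\<xi>. \<xi> \<in> l2 G \<Longrightarrow> (\<lambda>x. T \<xi> x - lreg G p \<xi> x) \<in> l2 G"
    "\<And>\<xi>. \<xi> \<in> l2 G \<Longrightarrow> l2norm G (\<lambda>x. T \<xi> x - lreg G p \<xi> x) \<le> e * l2norm G \<xi>"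
proof -
  obtain p where "finsupp G p" "supp p \<subseteq> B"
    "\<And>\<xi>. \<xi> \<in> l2 G \<Longrightarrow> l2norm G (\<lambda>x. T \<xi> x - lreg G p \<xi> x) \<le> e * l2norm G \<xi>"
    using assms unfolding cstar_of_def op_close_def supp_def by blast
  with that l2_diff(1)[OF cstar_of_l2[OF T] lreg_l2(1)] show thesis by blast
qed

lemma cstar_of_bounded:
  assumes T: "T \<in> cstar_of G B"
  obtains M where "M \<ge> 0" "\<And>\<xi>. \<xi> \<in> l2 G \<Longrightarrow> l2norm G (T \<xi>) \<le> M * l2norm G \<xi>"
proof -
  obtain p where p: "finsupp G p"
    and approx: "\<And>\<xi>. \<xi> \<in> l2 G \<Longrightarrow> l2norm G (\<lambda>x. T \<xi> x - lreg G p \<xi> x) \<le> 1 * l2norm G \<xi>"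
    using cstar_of_approx[OF T zero_less_one] by metis
  have "l2norm G (T \<xi>) \<le> (1 + l1norm p) * l2norm G \<xi>" if \<xi>: "\<xi> \<in> l2 G" for \<xi>
    using l2norm_le_diff_add[OF cstar_of_l2[OF T \<xi>] lreg_l2(1)[OF p \<xi>]] approx[OF \<xi>]
      lreg_l2(2)[OF p \<xi>]
    by (simp add: algebra_simps)
  moreover have "1 + l1norm p \<ge> 0" by (simp add: l1norm_def sum_nonneg)
  ultimately show thesis using that by blast
qed

lemma cstar_of_lincomb:
  assumes T: "T \<in> cstar_of G B" and \<xi>: "\<xi> \<in> l2 G" and \<eta>: "\<eta> \<in> l2 G"
  shows "T (\<lambda>x. c * \<xi> x + \<eta> x) = (\<lambda>x. c * T \<xi> x + T \<eta> x)"
proof -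
  define s where "s = (\<lambda>x. c * \<xi> x + \<eta> x)"
  have s: "s \<in> l2 G" unfolding s_def using l2_add(1)[OF l2_scale(1)[OF \<xi>] \<eta>] .
  let ?D = "\<lambda>x. T s x - (c * T \<xi> x + T \<eta> x)"
  have D: "?D \<in> l2 G"
    using l2_diff(1)[OF cstar_of_l2[OF T s] l2_add(1)[OF l2_scale(1)[OF cstar_of_l2[OF T \<xi>]]
        cstar_of_l2[OF T \<eta>]]] .
  have "l2norm G ?D \<le> e * (l2norm G s + cmod c * l2norm G \<xi> + l2norm G \<eta>)" if "e > 0" for e
  proof -
    obtain p where p: "finsupp G p"
      and err: "\<And>\<zeta>. \<zeta> \<in> l2 G \<Longrightarrow> (\<lambda>x. T \<zeta> x - lreg G p \<zeta> x) \<in> l2 G"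
      and small: "\<And>\<zeta>. \<zeta> \<in> l2 G \<Longrightarrow> l2norm G (\<lambda>x. T \<zeta> x - lreg G p \<zeta> x) \<le> e * l2norm G \<zeta>"
      using cstar_of_approx[OF T \<open>e > 0\<close>] by metis
    let ?err = "\<lambda>\<zeta> x. T \<zeta> x - lreg G p \<zeta> x"
    have eq: "?D = (\<lambda>x. ?err s x - (c * ?err \<xi> x + ?err \<eta> x))"
      unfolding s_def lreg_lincomb[OF p \<xi> \<eta>] by (simp add: fun_eq_iff right_diff_distrib)
    have c_err: "(\<lambda>x. c * ?err \<xi> x) \<in> l2 G" using l2_scale(1)[OF err[OF \<xi>]] .
    have "l2norm G ?D \<le> l2norm G (?err s) + (cmod c * l2norm G (?err \<xi>) + l2norm G (?err \<eta>))"
      unfolding eq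
      using l2_diff(2)[OF err[OF s] l2_add(1)[OF c_err err[OF \<eta>]]]
        l2_add(2)[OF c_err err[OF \<eta>]] l2_scale(2)[OF err[OF \<xi>], of c]
      by linarith
    also have "\<dots> \<le> e * l2norm G s + (cmod c * (e * l2norm G \<xi>) + e * l2norm G \<eta>)"
      using small s \<xi> \<eta> by (intro add_mono mult_left_mono) auto
    finally show ?thesis by (simp add: algebra_simps)
  qed
  then have "?D = (\<lambda>_. 0)" by (rule l2_eq_zeroI[OF D]) (auto intro!: add_nonneg_nonneg)
  then show ?thesis by (simp add: fun_eq_iff s_def)
qed

lemma cstar_of_zero:
  assumes "T \<in> cstar_of G B"
  shows "T (\<lambda>_. 0) = (\<lambda>_. 0)"
  using cstar_of_lincomb[OF assms l2_zero(1) l2_zero(1), of "-1"] by simp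

lemma cstar_of_add:
  assumes "T \<in> cstar_of G B" "\<xi> \<in> l2 G" "\<eta> \<in> l2 G"
  shows "T (\<lambda>x. \<xi> x + \<eta> x) = (\<lambda>x. T \<xi> x + T \<eta> x)"
  using cstar_of_lincomb[OF assms, of 1] by simp

lemma cstar_of_diff:
  assumes "T \<in> cstar_of G B" "\<xi> \<in> l2 G" "\<eta> \<in> l2 G"
  shows "T (\<lambda>x. \<xi> x - \<eta> x) = (\<lambda>x. T \<xi> x - T \<eta> x)"
  using cstar_of_lincomb[OF assms(1,3,2), of "-1"] by simp

lemma cstar_of_sum:
  assumes T: "T \<in> cstar_of G B" and "finite S" "\<And>i. i \<in> S \<Longrightarrow> \<xi> i \<in> l2 G"
  shows "T (\<lambda>x. \<Sum>i\<in>S. c i * \<xi> i x) = (\<lambda>x. \<Sum>i\<in>S. c i * T (\<xi> i) x)"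
  using assms(2,3)
proof (induction S rule: finite_induct)
  case empty
  then show ?case using cstar_of_zero[OF T] by simp
next
  case (insert a S)
  have "(\<lambda>x. \<Sum>i\<in>S. c i * \<xi> i x) \<in> l2 G"
    using l2_sum[OF insert.hyps(1), of "\<lambda>i x. c i * \<xi> i x" G] l2_scale(1) insert.prems by blast
  then show ?case
    using cstar_of_lincomb[OF T, of "\<xi> a" "\<lambda>x. \<Sum>i\<in>S. c i * \<xi> i x" "c a"] insert by simp
qed

lemma cstar_of_rtrans:
  assumes T: "T \<in> cstar_of G B" and h: "h \<in> carrier G" and \<xi>: "\<xi> \<in> l2 G"
  shows "T (rtrans h \<xi>) = rtrans h (T \<xi>)"
proof -
  have r: "rtrans h \<xi> \<in> l2 G" using rtrans_l2[OF h \<xi>] by simp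
  let ?D = "\<lambda>x. T (rtrans h \<xi>) x - rtrans h (T \<xi>) x"
  have D: "?D \<in> l2 G" using l2_diff(1)[OF cstar_of_l2[OF T r] rtrans_l2(1)[OF h cstar_of_l2[OF T \<xi>]]] .
  have bound: "l2norm G ?D \<le> e * (l2norm G (rtrans h \<xi>) + l2norm G \<xi>)" if "e > 0" for e
  proof -
    obtain p where p: "finsupp G p"
      and err: "\<And>\<zeta>. \<zeta> \<in> l2 G \<Longrightarrow> (\<lambda>x. T \<zeta> x - lreg G p \<zeta> x) \<in> l2 G"
      and small: "\<And>\<zeta>. \<zeta> \<in> l2 G \<Longrightarrow> l2norm G (\<lambda>x. T \<zeta> x - lreg G p \<zeta> x) \<le> e * l2norm G \<zeta>"
      using cstar_of_approx[OF T \<open>e > 0\<close>] by metis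
    let ?err = "\<lambda>\<zeta> x. T \<zeta> x - lreg G p \<zeta> x"
    have eq: "?D = (\<lambda>x. ?err (rtrans h \<xi>) x - rtrans h (?err \<xi>) x)"
      using lreg_rtrans[OF p \<xi> h] by (auto simp: fun_eq_iff rtrans_def)
    show ?thesis
      unfolding eq distrib_left
      using l2_diff(2)[OF err[OF r] rtrans_l2(1)[OF h err[OF \<xi>]]] rtrans_l2(2)[OF h err[OF \<xi>]]
        small[OF r] small[OF \<xi>] by linarith
  qed
  have "?D = (\<lambda>_. 0)" by (rule l2_eq_zeroI[OF D bound]) (simp_all only: add_nonneg_nonneg l2norm_nonneg)
  then show ?thesis by (simp add: fun_eq_iff)
qed

lemma cstar_of_dirac:
  assumes T: "T \<in> cstar_of G B" and h: "h \<in> carrier G" and y: "y \<in> carrier G"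
  shows "T (dirac h) y = T (dirac \<one>) (y \<otimes> inv h)"
proof -
  have "T (dirac h) = rtrans (inv h) (T (dirac \<one>))"
    using cstar_of_rtrans[OF T inv_closed[OF h] l2_dirac[OF one_closed]] rtrans_dirac[OF h] by simp
  then show ?thesis using y by (simp add: rtrans_def)
qed

lemma cstar_of_commute_lreg:
  assumes T: "T \<in> cstar_of G B"
    and comm: "\<And>g \<eta>. g \<in> carrier G \<Longrightarrow> \<eta> \<in> l2 G \<Longrightarrow> T (ltrans g \<eta>) = ltrans g (T \<eta>)"
    and p: "finsupp G p" and \<eta>: "\<eta> \<in> l2 G"
  shows "T (lreg G p \<eta>) = lreg G p (T \<eta>)"
proof -
  have supp: "finite (supp p)" "supp p \<subseteq> carrier G" using p by (auto simp: finsupp_iff)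
  have "T (lreg G p \<eta>) = (\<lambda>x. \<Sum>y\<in>supp p. p y * T (ltrans y \<eta>) x)"
    unfolding lreg_eq_sum[OF p \<eta>]
    by (rule cstar_of_sum[OF T supp(1)]) (use supp(2) ltrans_l2(1)[OF _ \<eta>] in blast)
  also have "\<dots> = (\<lambda>x. \<Sum>y\<in>supp p. p y * ltrans y (T \<eta>) x)"
    using comm[OF _ \<eta>] supp(2) by (intro ext sum.cong) auto
  also have "\<dots> = lreg G p (T \<eta>)" using lreg_eq_sum[OF p cstar_of_l2[OF T \<eta>]] by simp
  finally show ?thesis .
qed

lemma cstar_of_commute_Cred:
  assumes T: "T \<in> cstar_of G B"
    and comm: "\<And>g \<eta>. g \<in> carrier G \<Longrightarrow> \<eta> \<in> l2 G \<Longrightarrow> T (ltrans g \<eta>) = ltrans g (T \<eta>)"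
    and S: "S \<in> Cred G"
  shows "T (S \<xi>) = S (T \<xi>)"
proof (cases "\<xi> \<in> l2 G")
  case False
  with S T show ?thesis by (simp add: Cred_def cstar_of_outside_l2 cstar_of_zero)
next
  case \<xi>: True
  have S: "S \<in> cstar_of G (carrier G)" using S by (simp add: Cred_def)
  obtain M where M: "M \<ge> 0" "\<And>\<xi>. \<xi> \<in> l2 G \<Longrightarrow> l2norm G (T \<xi>) \<le> M * l2norm G \<xi>"
    using cstar_of_bounded[OF T] by metis
  have T\<xi>: "T \<xi> \<in> l2 G" using cstar_of_l2[OF T \<xi>] .
  let ?D = "\<lambda>x. T (S \<xi>) x - S (T \<xi>) x"
  have D: "?D \<in> l2 G" using l2_diff(1)[OF cstar_of_l2[OF T] cstar_of_l2[OF S T\<xi>]] cstar_of_l2[OF S \<xi>] .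
  have bound: "l2norm G ?D \<le> e * (M * l2norm G \<xi> + l2norm G (T \<xi>))" if "e > 0" for e
  proof -
    obtain p where p: "finsupp G p"
      and err: "\<And>\<zeta>. \<zeta> \<in> l2 G \<Longrightarrow> (\<lambda>x. S \<zeta> x - lreg G p \<zeta> x) \<in> l2 G"
      and small: "\<And>\<zeta>. \<zeta> \<in> l2 G \<Longrightarrow> l2norm G (\<lambda>x. S \<zeta> x - lreg G p \<zeta> x) \<le> e * l2norm G \<zeta>"
      using cstar_of_approx[OF S \<open>e > 0\<close>] by metis
    let ?err = "\<lambda>\<zeta> x. S \<zeta> x - lreg G p \<zeta> x"
    have eq: "?D = (\<lambda>x. T (?err \<xi>) x - ?err (T \<xi>) x)"
      using cstar_of_diff[OF T cstar_of_l2[OF S \<xi>] lreg_l2(1)[OF p \<xi>]]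
        cstar_of_commute_lreg[OF T comm p \<xi>]
      by (simp add: fun_eq_iff)
    have "l2norm G ?D \<le> M * l2norm G (?err \<xi>) + e * l2norm G (T \<xi>)"
      unfolding eq using l2_diff(2)[OF cstar_of_l2[OF T err[OF \<xi>]] err[OF T\<xi>]] M(2)[OF err[OF \<xi>]] small[OF T\<xi>]
      by linarith
    also have "\<dots> \<le> M * (e * l2norm G \<xi>) + e * l2norm G (T \<xi>)"
      using small[OF \<xi>] M(1) by (simp add: mult_left_mono)
    finally show ?thesis by (simp add: algebra_simps)
  qed
  have "?D = (\<lambda>_. 0)"
    by (rule l2_eq_zeroI[OF D bound])
      (simp_all only: add_nonneg_nonneg mult_nonneg_nonneg M(1) l2norm_nonneg)
  then show ?thesis by (simp add: fun_eq_iff)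
qed

lemma rcos_mem_sym:
  assumes "subgroup A G" "x \<in> carrier G" "y \<in> carrier G"
  shows "y \<in> A #> x \<longleftrightarrow> x \<in> A #> y"
  using assms by (metis repr_independence rcos_self)

lemma rcos_disjoint_cases:
  assumes "subgroup A G" "x \<in> carrier G" "x' \<in> carrier G" "A #> x \<noteq> A #> x'"
  shows "(A #> x) \<inter> (A #> x') = {}"
  using rcos_disjoint[OF assms(1)] rcosetsI[OF subgroup.subset[OF assms(1)]] assms(2-4)
  by (auto simp: pairwise_def disjnt_def)

lemma proj_on_eq_sum_dirac:
  "finite F \<Longrightarrow> proj_on F \<xi> = (\<lambda>x. \<Sum>h\<in>F. \<xi> h * dirac h x)"
  by (auto simp: fun_eq_iff proj_on_def dirac_def if_distrib sum.delta cong: if_cong)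

lemma cstar_of_proj_on_finite:
  assumes T: "T \<in> cstar_of G B" and S: "finite S" "S \<subseteq> carrier G"
  shows "T (proj_on S \<xi>) = (\<lambda>y. \<Sum>h\<in>S. \<xi> h * T (dirac h) y)"
proof -
  have "dirac h \<in> l2 G" if "h \<in> S" for h
    using S(2) that by (intro l2_dirac) blast
  then show ?thesis
    unfolding proj_on_eq_sum_dirac[OF S(1)] by (rule cstar_of_sum[OF T S(1)])
qed

lemma cstar_of_proj_rcos_finite:
  assumes A: "subgroup A G" and T: "T \<in> cstar_of G B"
    and supp_A: "\<And>z. z \<notin> A \<Longrightarrow> T (dirac \<one>) z = 0"
    and F: "finite F" "F \<subseteq> carrier G" and x: "x \<in> carrier G"
  shows "T (proj_on (A #> x) (proj_on F \<xi>)) x = T (proj_on F \<xi>) x"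
proof -
  have outside: "T (dirac h) x = 0" if "h \<in> carrier G" "h \<notin> A #> x" for h
  proof -
    have "x \<notin> A #> h" using rcos_mem_sym[OF A that(1) x] that(2) by simp
    then have "x \<otimes> inv h \<notin> A" using subgroup.rcos_module[OF A is_group that(1) x] by simp
    then show ?thesis unfolding cstar_of_dirac[OF T that(1) x] by (rule supp_A)
  qed
  have "proj_on (A #> x) (proj_on F \<xi>) = proj_on (F \<inter> (A #> x)) \<xi>"
    by (auto simp: proj_on_def)
  then have "T (proj_on (A #> x) (proj_on F \<xi>)) x = (\<Sum>h\<in>F \<inter> (A #> x). \<xi> h * T (dirac h) x)"
    using cstar_of_proj_on_finite[OF T, of "F \<inter> (A #> x)" \<xi>] F by (simp add: le_infI1)
  also have "\<dots> = (\<Sum>h\<in>F. \<xi> h * T (dirac h) x)"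
    using F outside by (intro sum.mono_neutral_left) auto
  also have "\<dots> = T (proj_on F \<xi>) x" using cstar_of_proj_on_finite[OF T F] by simp
  finally show ?thesis .
qed

lemma cstar_of_proj_rcos:
  assumes A: "subgroup A G" and T: "T \<in> cstar_of G B"
    and supp_A: "\<And>z. z \<notin> A \<Longrightarrow> T (dirac \<one>) z = 0"
    and \<xi>: "\<xi> \<in> l2 G" and x: "x \<in> carrier G"
  shows "T (proj_on (A #> x) \<xi>) x = T \<xi> x"
proof -
  let ?P = "proj_on (A #> x)"
  obtain M where M: "M \<ge> 0" "\<And>\<xi>. \<xi> \<in> l2 G \<Longrightarrow> l2norm G (T \<xi>) \<le> M * l2norm G \<xi>"
    using cstar_of_bounded[OF T] by metis
  have bound: "cmod (T (?P \<xi>) x - T \<xi> x) \<le> e * (2 * M)" if e: "e > 0" for e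
  proof -
    obtain F where F: "finite F" "F \<subseteq> carrier G"
      and small: "l2norm G (\<lambda>y. \<xi> y - proj_on F \<xi> y) \<le> e"
      using l2_finite_approx[OF \<xi> e] by blast
    define \<eta> where "\<eta> = (\<lambda>y. \<xi> y - proj_on F \<xi> y)"
    have PF: "proj_on F \<xi> \<in> l2 G" using proj_on_l2(1)[OF \<xi>] .
    have \<eta>: "\<eta> \<in> l2 G" unfolding \<eta>_def using l2_diff(1)[OF \<xi> PF] .
    have P\<eta>: "?P \<eta> \<in> l2 G" using proj_on_l2(1)[OF \<eta>] .
    have "T \<xi> x = T (\<lambda>y. \<eta> y + proj_on F \<xi> y) x"
      by (rule arg_cong[where f = "\<lambda>\<zeta>. T \<zeta> x"]) (simp add: \<eta>_def)
    also have "\<dots> = T \<eta> x + T (proj_on F \<xi>) x" by (simp add: cstar_of_add[OF T \<eta> PF])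
    finally have T\<xi>: "T \<xi> x = T \<eta> x + T (proj_on F \<xi>) x" .
    have "T (?P \<xi>) x = T (\<lambda>y. ?P \<eta> y + ?P (proj_on F \<xi>) y) x"
      by (rule arg_cong[where f = "\<lambda>\<zeta>. T \<zeta> x"]) (auto simp: \<eta>_def proj_on_def)
    also have "\<dots> = T (?P \<eta>) x + T (proj_on F \<xi>) x"
      by (simp add: cstar_of_add[OF T P\<eta> proj_on_l2(1)[OF PF]]
          cstar_of_proj_rcos_finite[OF A T supp_A F x])
    finally have "T (?P \<xi>) x - T \<xi> x = T (?P \<eta>) x - T \<eta> x" using T\<xi> by simp
    also have "cmod \<dots> \<le> M * l2norm G (?P \<eta>) + M * l2norm G \<eta>"
      using norm_triangle_ineq4[of "T (?P \<eta>) x" "T \<eta> x"]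
        abs_le_l2norm[OF cstar_of_l2[OF T P\<eta>], of x] M(2)[OF P\<eta>]
        abs_le_l2norm[OF cstar_of_l2[OF T \<eta>], of x] M(2)[OF \<eta>]
      by linarith
    also have "\<dots> \<le> M * e + M * e"
      using proj_on_l2(2)[OF \<eta>, of "A #> x"] small M(1) unfolding \<eta>_def
      by (intro add_mono mult_left_mono) auto
    finally show ?thesis by (simp add: algebra_simps)
  qed
  have "cmod (T (?P \<xi>) x - T \<xi> x) \<le> 0"
    by (rule le_zero_if_le_eps_mult[where K = "2 * M"]) (simp_all add: M(1) bound)
  then show ?thesis by simp
qed

lemma lreg_proj_rcos:
  assumes A: "subgroup A G" and p: "finsupp G p" and \<xi>: "\<xi> \<in> l2 G" and x: "x \<in> carrier G"
  shows "lreg G p (proj_on (A #> x) \<xi>) x = lreg G (\<lambda>y. if y \<in> A then p y else 0) \<xi> x"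
proof -
  let ?q = "\<lambda>y. if y \<in> A then p y else 0"
  have supp: "finite (supp p)" "supp p \<subseteq> carrier G" using p by (auto simp: finsupp_iff)
  have mem: "inv y \<otimes> x \<in> A #> x \<longleftrightarrow> y \<in> A" if "y \<in> carrier G" for y
    using that x subgroup.rcos_module[OF A is_group, of x "inv y \<otimes> x"] A
    by (simp add: m_assoc) (metis inv_inv subgroup.m_inv_closed)
  have "lreg G p (proj_on (A #> x) \<xi>) x = (\<Sum>y\<in>supp p. if y \<in> A then p y * \<xi> (inv y \<otimes> x) else 0)"
    using proj_on_l2(1)[OF \<xi>] x supp(2) mem
    by (auto simp: lreg_def supp_def proj_on_def intro!: sum.cong)
  also have "\<dots> = (\<Sum>y\<in>supp ?q. ?q y * \<xi> (inv y \<otimes> x))"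
    using supp(1) by (auto simp: sum.inter_filter[symmetric] supp_def intro: sum.cong)
  also have "\<dots> = lreg G ?q \<xi> x" using \<xi> x by (simp add: lreg_def supp_def)
  finally show ?thesis .
qed

lemma cstar_of_subgroupI:
  assumes A: "subgroup A G" and T: "T \<in> cstar_of G B"
    and supp_A: "\<And>z. z \<notin> A \<Longrightarrow> T (dirac \<one>) z = 0"
  shows "T \<in> cstar_of G A"
  unfolding cstar_of_def
proof (intro CollectI conjI allI ballI impI)
  fix e :: real assume e: "e > 0"
  obtain p where p: "finsupp G p"
    and err: "\<And>\<xi>. \<xi> \<in> l2 G \<Longrightarrow> (\<lambda>x. T \<xi> x - lreg G p \<xi> x) \<in> l2 G"
    and small: "\<And>\<xi>. \<xi> \<in> l2 G \<Longrightarrow> l2norm G (\<lambda>x. T \<xi> x - lreg G p \<xi> x) \<le> e * l2norm G \<xi>"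
    using cstar_of_approx[OF T e] by metis
  define q where "q = (\<lambda>y. if y \<in> A then p y else 0)"
  have "supp q \<subseteq> supp p" "supp q \<subseteq> A" by (auto simp: q_def supp_def)
  then have "finsupp G q" "{x. q x \<noteq> 0} \<subseteq> A"
    using p subgroup.subset[OF A] finite_subset[of "supp q" "supp p"]
    by (auto simp: finsupp_iff supp_def)
  moreover have "op_close G T (lreg G q) e"
    unfolding op_close_def
  proof
    fix \<xi> assume \<xi>: "\<xi> \<in> l2 G"
    \<comment> \<open>Coset by coset, \<open>T - lreg G q\<close> is the compression of \<open>T - lreg G p\<close>.\<close>
    have eq: "(\<lambda>x. T \<xi> x - lreg G q \<xi> x)
        = (\<lambda>x. if x \<in> carrier G then T (proj_on (A #> x) \<xi>) x - lreg G p (proj_on (A #> x) \<xi>) x else 0)"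
      using cstar_of_proj_rcos[OF A T supp_A \<xi>] lreg_proj_rcos[OF A p \<xi>] l2_vanishes cstar_of_l2[OF T \<xi>]
        \<xi> by (auto simp: fun_eq_iff q_def lreg_def)
    show "l2norm G (\<lambda>x. T \<xi> x - lreg G q \<xi> x) \<le> e * l2norm G \<xi>"
      unfolding eq
      using rcos_disjoint_cases[OF A] r_coset_subset_G[OF subgroup.subset[OF A]] e err small \<xi>
      by (intro l2_cellwise_bounded(2)) auto
  qed
  ultimately show "\<exists>q. finsupp G q \<and> {x. q x \<noteq> 0} \<subseteq> A \<and> op_close G T (lreg G q) e"
    by blast
qed (use T in \<open>simp_all add: cstar_of_l2 cstar_of_outside_l2\<close>)

lemma Cred_centre_in_Cred: "T \<in> Cred_centre G \<Longrightarrow> T \<in> cstar_of G (carrier G)"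
  by (simp add: Cred_centre_def Cred_def)

lemma Cred_centre_commute_ltrans:
  assumes T: "T \<in> Cred_centre G" and g: "g \<in> carrier G" and \<eta>: "\<eta> \<in> l2 G"
  shows "T (ltrans g \<eta>) = ltrans g (T \<eta>)"
proof -
  have "T (ug G g \<eta>) = ug G g (T \<eta>)"
    using T ug_in_Cred[OF g] by (auto simp: Cred_centre_def fun_eq_iff)
  then show ?thesis
    using ug_eq_ltrans[OF g \<eta>] ug_eq_ltrans[OF g cstar_of_l2[OF Cred_centre_in_Cred[OF T] \<eta>]] by simp
qed

lemma Cred_centre_dirac_conj:
  assumes T: "T \<in> Cred_centre G" and g: "g \<in> carrier G" and x: "x \<in> carrier G"
  shows "T (dirac \<one>) (g \<otimes> x \<otimes> inv g) = T (dirac \<one>) x"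
proof -
  have "T (dirac (inv g)) (x \<otimes> inv g) = T (dirac \<one>) (g \<otimes> (x \<otimes> inv g))"
    using Cred_centre_commute_ltrans[OF T inv_closed[OF g] l2_dirac[OF one_closed]] ltrans_dirac g x
    by (simp add: ltrans_def)
  moreover have "T (dirac (inv g)) (x \<otimes> inv g) = T (dirac \<one>) (x \<otimes> inv g \<otimes> g)"
    using cstar_of_dirac[OF Cred_centre_in_Cred[OF T] inv_closed[OF g]] g x by simp
  ultimately show ?thesis using g x by (simp add: m_assoc)
qed

lemma Cred_centre_dirac_vanishes:
  assumes T: "T \<in> Cred_centre G" and z: "z \<notin> FC_centre G"
  shows "T (dirac \<one>) z = 0"
proof (cases "z \<in> carrier G")
  case False
  then show ?thesis using l2_vanishes[OF cstar_of_l2[OF Cred_centre_in_Cred[OF T] l2_dirac]] by simp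
next
  case True
  let ?f = "T (dirac \<one>)"
  let ?class = "{h \<otimes> z \<otimes> inv h | h. h \<in> carrier G}"
  have summable: "abs_sq ?f summable_on ?class"
    using cstar_of_l2[OF Cred_centre_in_Cred[OF T] l2_dirac[OF one_closed]] True
    by (auto simp: l2_iff intro: summable_on_subset_banach)
  have const: "abs_sq ?f w = (cmod (?f z))\<^sup>2" if "w \<in> ?class" for w
    using that Cred_centre_dirac_conj[OF T _ True] by (auto simp: abs_sq_def)
  have "(\<lambda>_. (cmod (?f z))\<^sup>2) summable_on ?class"
    using summable_on_cong[of ?class "abs_sq ?f" "\<lambda>_. (cmod (?f z))\<^sup>2"] const summable by simp
  moreover have "infinite ?class" using z True by (simp add: FC_centre_def)
  ultimately have "(cmod (?f z))\<^sup>2 = 0"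
    using infsum_diverge_constant[of ?class "(cmod (?f z))\<^sup>2"] by blast
  then show ?thesis by simp
qed

lemma Cred_centre_subset_cstar_of_FC:
  assumes "subgroup (FC_centre G) G"
  shows "Cred_centre G \<subseteq> cstar_of G (FC_centre G)"
proof
  fix T assume "T \<in> Cred_centre G"
  then show "T \<in> cstar_of G (FC_centre G)"
    using cstar_of_subgroupI[OF assms Cred_centre_in_Cred] Cred_centre_dirac_vanishes by blast
qed

lemma Cred_centre_conj_invariant:
  assumes T: "T \<in> Cred_centre G" and g: "g \<in> carrier G"
  shows "(\<lambda>\<xi>. ug G g (T (ug G (inv g) \<xi>))) = T"
proof
  fix \<xi>
  have T': "T \<in> cstar_of G (carrier G)" using Cred_centre_in_Cred[OF T] .
  show "ug G g (T (ug G (inv g) \<xi>)) = T \<xi>"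
  proof (cases "\<xi> \<in> l2 G")
    case True
    then show ?thesis
      using Cred_centre_commute_ltrans[OF T inv_closed[OF g] True] cstar_of_l2[OF T' True] g
      by (simp add: ug_eq_ltrans ltrans_l2 ltrans_ltrans ltrans_one)
  next
    case False
    then show ?thesis
      using cstar_of_outside_l2[OF T'] cstar_of_zero[OF T'] by (simp add: ug_def lreg_outside_l2 lreg_zero)
  qed
qed

lemma fixed_points_commute_ltrans:
  assumes T: "T \<in> fixed_points G (cstar_of G B)" and g: "g \<in> carrier G" and \<eta>: "\<eta> \<in> l2 G"
  shows "T (ltrans g \<eta>) = ltrans g (T \<eta>)"
proof -
  have T': "T \<in> cstar_of G B" using T by (simp add: fixed_points_def)
  have "(\<lambda>\<xi>. ug G g (T (ug G (inv g) \<xi>))) = T" using T g by (simp add: fixed_points_def)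
  then have "T (ltrans g \<eta>) = ug G g (T (ug G (inv g) (ltrans g \<eta>)))" by metis
  also have "ug G (inv g) (ltrans g \<eta>) = \<eta>"
    using g \<eta> by (simp add: ug_eq_ltrans ltrans_l2 ltrans_ltrans ltrans_one)
  finally show ?thesis using ug_eq_ltrans[OF g cstar_of_l2[OF T' \<eta>]] by simp
qed

lemma fixed_points_subset_Cred_centre:
  assumes "B \<subseteq> carrier G"
  shows "fixed_points G (cstar_of G B) \<subseteq> Cred_centre G"
proof
  fix T assume T: "T \<in> fixed_points G (cstar_of G B)"
  then have T': "T \<in> cstar_of G B" by (simp add: fixed_points_def)
  then have "T \<in> Cred G" using cstar_of_mono[OF assms] by (auto simp: Cred_def)
  moreover have "(\<lambda>\<xi>. T (S \<xi>)) = (\<lambda>\<xi>. S (T \<xi>))" if "S \<in> Cred G" for S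
    using cstar_of_commute_Cred[OF T' fixed_points_commute_ltrans[OF T] that] by simp
  ultimately show "T \<in> Cred_centre G" by (simp add: Cred_centre_def)
qed

lemma Cred_centre_eq_fixed_points:
  assumes "subgroup (FC_centre G) G"
  shows "Cred_centre G = fixed_points G (cstar_of G (FC_centre G))"
proof
  show "Cred_centre G \<subseteq> fixed_points G (cstar_of G (FC_centre G))"
    using Cred_centre_subset_cstar_of_FC[OF assms] Cred_centre_conj_invariant by (auto simp: fixed_points_def)
  show "fixed_points G (cstar_of G (FC_centre G)) \<subseteq> Cred_centre G"
    using fixed_points_subset_Cred_centre subgroup.subset[OF assms] by blast
qed

end

theorem proposition2p6:
  fixes G :: "('a, 'b) monoid_scheme"
  assumes "group G" and "torsion_free G"
  shows "FC_centre G \<lhd> G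
    \<and> (\<forall>a\<in>FC_centre G. \<forall>b\<in>FC_centre G. a \<otimes>\<^bsub>G\<^esub> b = b \<otimes>\<^bsub>G\<^esub> a)
    \<and> Cred_centre G \<subseteq> cstar_of G (FC_centre G)
    \<and> Cred_centre G = fixed_points G (cstar_of G (FC_centre G))"
proof -
  interpret group G by (rule assms(1))
  show ?thesis
    using FC_centre_normal FC_centre_commute[OF assms(2)]
      Cred_centre_subset_cstar_of_FC[OF FC_centre_subgroup] Cred_centre_eq_fixed_points[OF FC_centre_subgroup]
    by blast
qed

end
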